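(* Let $p$ be a prime. The group $X_{\{p\}}$ is a uniserial $\langle s\rangle$-module: for every integer $j\ge 0$ it has a unique $\langle s\rangle$-submodule of order $p^j$, namely $X_{p^j}=X\cap\ker\gamma^j$ (with $X_{1}=1$), and for $j\ge1$ this submodule is generated as an $\langle s\rangle$-module by $x_{p^j}$.
   Context: $s$ is the permutation matrix of the $p$-cycle $(1,2,\ldots,p)$ (permutations $\alpha$ correspond to matrices $[\delta_{i\alpha,j}]_{i,j}$), acting on the diagonal group $\mathrm{D}(p,\mathbb{C})$ by conjugation, $d^s=s^{-1}ds$; the action is extended to the integral group ring written exponentially and multiplicatively, e.g. $d^{1-s}=d\,(d^s)^{-1}$. $X=\mathrm{SL}(p,\mathbb{C})\cap\mathrm{D}(p,\mathbb{C})$, and $X_{\{p\}}$ is the subgroup of elements of $X$ of $p$-power order. $\gamma$ is the endomorphism $\gamma(d)=d^{1-s}$ of $\mathrm{D}(p,\mathbb{C})$. For $m\ge1$ let $b_m=\mathrm{diag}(e^{2\pi i/m},e^{-2\pi i/m},1,\ldots,1)$. For a positive integer $j$ write $j=n(p-1)-m$ with $n,m$ non-negative integers and $m<p-1$, and set $x_{p^j}=\gamma^m(b_{p^n})$. *)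

theory Defs
  imports "HOL-Analysis.Analysis"
begin

text \<open>Diagonal matrices diag(d_0,...,d_(p-1)) in D(p,C) are encoded as functions
  nat => complex with d i nonzero for i < p and d i = 1 for i >= p
  (indices shifted from 1..p to 0..p-1).\<close>

definition Dg :: "nat \<Rightarrow> (nat \<Rightarrow> complex) set" where
  "Dg p = {d. (\<forall>i<p. d i \<noteq> 0) \<and> (\<forall>i\<ge>p. d i = 1)}"

definition dmul :: "(nat \<Rightarrow> complex) \<Rightarrow> (nat \<Rightarrow> complex) \<Rightarrow> (nat \<Rightarrow> complex)" where
  "dmul d e = (\<lambda>i. d i * e i)"

definition dinv :: "(nat \<Rightarrow> complex) \<Rightarrow> (nat \<Rightarrow> complex)" where
  "dinv d = (\<lambda>i. inverse (d i))"

definition done1 :: "nat \<Rightarrow> complex" where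
  "done1 = (\<lambda>i. 1)"

definition dpow :: "(nat \<Rightarrow> complex) \<Rightarrow> nat \<Rightarrow> (nat \<Rightarrow> complex)" where
  "dpow d k = (\<lambda>i. d i ^ k)"

text \<open>Conjugation by the permutation matrix s of the p-cycle (1,2,...,p):
  (s^-1 d s) has i-th diagonal entry d_(i-1) (indices mod p).\<close>
definition sact :: "nat \<Rightarrow> (nat \<Rightarrow> complex) \<Rightarrow> (nat \<Rightarrow> complex)" where
  "sact p d = (\<lambda>i. if i < p then d ((i + p - 1) mod p) else 1)"

text \<open>gamma(d) = d^(1-s) = d (d^s)^-1\<close>
definition gam :: "nat \<Rightarrow> (nat \<Rightarrow> complex) \<Rightarrow> (nat \<Rightarrow> complex)" where
  "gam p d = dmul d (dinv (sact p d))"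

definition Xg :: "nat \<Rightarrow> (nat \<Rightarrow> complex) set" where
  "Xg p = {d \<in> Dg p. (\<Prod>i<p. d i) = 1}"

definition Xpp :: "nat \<Rightarrow> (nat \<Rightarrow> complex) set" where
  "Xpp p = {d \<in> Xg p. \<exists>k. dpow d (p ^ k) = done1}"

definition Xker :: "nat \<Rightarrow> nat \<Rightarrow> (nat \<Rightarrow> complex) set" where
  "Xker p j = {d \<in> Xg p. (gam p ^^ j) d = done1}"

definition is_submod :: "nat \<Rightarrow> (nat \<Rightarrow> complex) set \<Rightarrow> bool" where
  "is_submod p H \<longleftrightarrow> H \<subseteq> Xpp p \<and> done1 \<in> H \<and>
     (\<forall>x\<in>H. \<forall>y\<in>H. dmul x y \<in> H) \<and> (\<forall>x\<in>H. dinv x \<in> H) \<and>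
     (\<forall>x\<in>H. sact p x \<in> H)"

definition gen_submod :: "nat \<Rightarrow> (nat \<Rightarrow> complex) \<Rightarrow> (nat \<Rightarrow> complex) set" where
  "gen_submod p x = \<Inter> {H. is_submod p H \<and> x \<in> H}"

definition bm :: "nat \<Rightarrow> nat \<Rightarrow> (nat \<Rightarrow> complex)" where
  "bm p m = (\<lambda>i. if i = 0 then exp (2 * pi * \<i> / of_nat m)
               else if i = 1 then exp (- 2 * pi * \<i> / of_nat m)
               else 1)"

text \<open>x_(p^j) = gamma^m(b_(p^n)) where j = n(p-1) - m, 0 <= m < p-1\<close>
definition xgen :: "nat \<Rightarrow> nat \<Rightarrow> (nat \<Rightarrow> complex)" where
  "xgen p j = (let n = (j + p - 2) div (p - 1); m = n * (p - 1) - j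
               in (gam p ^^ m) (bm p (p ^ n)))"

end

theory Submission
  imports Defs "HOL-Combinatorics.Orbits"
begin

text \<open>
  The map \<open>\<gamma>\<close> is a surjective endomorphism of \<open>X\<close> commuting with \<open>s\<close>, and
  \<open>X \<inter> ker \<gamma>\<close> consists of the \<open>p\<close> scalar matrices \<open>\<zeta>I\<close> with \<open>\<zeta>^p = 1\<close>.
  Hence \<open>X_{p^j} = X \<inter> ker \<gamma>^j\<close> has order \<open>p^j\<close> and exponent dividing \<open>p^j\<close>, and \<open>\<gamma>\<close>
  maps \<open>X_{p^(j+1)}\<close> onto \<open>X_{p^j}\<close>, its fibres being the cosets of \<open>X \<inter> ker \<gamma>\<close>.

  If \<open>H\<close> is an \<open>\<langle>s\<rangle>\<close>-submodule of order \<open>p^(j+1)\<close>, then \<open>s\<close> acts on \<open>H\<close> with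
  orbits of size \<open>1\<close> or \<open>p\<close>, so its fixed points \<open>H \<inter> ker \<gamma>\<close> form a nonempty set of size
  divisible by \<open>p\<close>; this forces \<open>X \<inter> ker \<gamma> \<subseteq> H\<close>. Then \<open>\<gamma>(H)\<close> is a submodule of order
  \<open>p^j\<close>, equal to \<open>X_{p^j}\<close> by induction, and \<open>H = X_{p^(j+1)}\<close> by counting.

  The \<open>p^n\<close>-torsion of \<open>X\<close> has order \<open>p^(n(p-1))\<close>, hence is \<open>X_{p^(n(p-1))}\<close>, and it is
  generated by \<open>b_{p^n}\<close>. As \<open>\<gamma>^m\<close> maps \<open>X_{p^(j+m)}\<close> onto \<open>X_{p^j}\<close>, the element
  \<open>x_{p^j} = \<gamma>^m(b_{p^n})\<close> generates \<open>X_{p^j}\<close>.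
\<close>

section \<open>Fixed points of a map of prime period\<close>

lemma funpow_closed:
  assumes "\<And>y. y \<in> A \<Longrightarrow> f y \<in> A" and "x \<in> A"
  shows "(f ^^ n) x \<in> A"
  by (induction n) (use assms in auto)

lemma orbit_eq_of_self_in_orbit:
  assumes "x \<in> orbit f x" and "z \<in> orbit f x"
  shows "orbit f z = orbit f x"
  using assms by (auto intro: orbit_trans orbit_swap)

lemma self_in_orbit_if_period:
  assumes "(f ^^ n) x = x" and "0 < n"
  shows "x \<in> orbit f x"
  using assms unfolding orbit_altdef by (metis (mono_tags, lifting) mem_Collect_eq)

lemma card_orbit_prime_period:
  assumes p: "prime p" and period: "(f ^^ p) x = x" and moved: "f x \<noteq> x"
  shows "card (orbit f x) = p"
proof -
  have x_in: "x \<in> orbit f x"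
    using period prime_gt_0_nat[OF p] by (rule self_in_orbit_if_period)
  define d where "d = funpow_dist1 f x x"
  have d_period: "(f ^^ d) x = x"
    unfolding d_def using x_in by (rule funpow_dist1_prop)
  have card_d: "card (orbit f x) = d"
    using orbit_conv_funpow_dist1[OF x_in] inj_on_funpow_dist1[OF x_in]
    by (simp add: d_def card_image)
  have "d dvd p"
    unfolding dvd_eq_mod_eq_0
  proof (rule ccontr)
    assume "p mod d \<noteq> 0"
    moreover have "(f ^^ (p mod d)) x = x"
      using funpow_mod_eq[OF d_period, of p] period by simp
    ultimately show False
      using funpow_dist1_least[of "p mod d" f x x] by (simp add: d_def)
  qed
  moreover have "d \<noteq> 1"
    using d_period moved by auto
  ultimately have "d = p"
    using p unfolding prime_nat_iff by blast
  with card_d show ?thesis by simp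
qed

text \<open>The points that are not fixed fall into orbits of size \<open>p\<close>.\<close>

lemma prime_dvd_card_fixpoints:
  assumes p: "prime p" and fin: "finite A" and maps: "f ` A \<subseteq> A"
    and period: "\<And>x. x \<in> A \<Longrightarrow> (f ^^ p) x = x" and dvd: "p dvd card A"
  shows "p dvd card {x \<in> A. f x = x}"
proof -
  define B where "B = {x \<in> A. f x \<noteq> x}"
  have self_in: "x \<in> orbit f x" if "x \<in> A" for x
    using period[OF that] prime_gt_0_nat[OF p] by (rule self_in_orbit_if_period)
  have orbit_in_B: "orbit f x \<subseteq> B" if x: "x \<in> B" for x
  proof
    fix y assume y: "y \<in> orbit f x"
    have "y \<in> A"
      using y x funpow_closed[of A f] maps by (auto simp: orbit_altdef B_def)
    moreover have "f y \<noteq> y"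
    proof
      assume fixed: "f y = y"
      have "x \<in> orbit f y"
        using x orbit_swap[OF self_in y] by (simp add: B_def)
      then have "x = y"
        using orbit_eq_singleton_iff[of f y] fixed by simp
      then show False using x fixed by (simp add: B_def)
    qed
    ultimately show "y \<in> B" by (simp add: B_def)
  qed
  have B_union: "\<Union> (orbit f ` B) = B"
    using orbit_in_B self_in by (auto simp: B_def)
  have "p dvd card (\<Union> (orbit f ` B))"
  proof (rule dvd_partition)
    show "finite (\<Union> (orbit f ` B))"
      unfolding B_union using fin by (simp add: B_def)
    have "card (orbit f x) = p" if "x \<in> B" for x
      using that card_orbit_prime_period[OF p period] by (simp add: B_def)
    then show "\<forall>c\<in>orbit f ` B. p dvd card c"
      by simp
    have "orbit f x = orbit f y" if "x \<in> B" "y \<in> B" "z \<in> orbit f x" "z \<in> orbit f y" for x y z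
      using that orbit_eq_of_self_in_orbit[OF self_in] by (metis B_def mem_Collect_eq)
    then show "\<forall>c1\<in>orbit f ` B. \<forall>c2\<in>orbit f ` B. c1 \<noteq> c2 \<longrightarrow> c1 \<inter> c2 = {}"
      by blast
  qed
  moreover have "card A = card {x \<in> A. f x = x} + card B"
  proof -
    have "card A = card ({x \<in> A. f x = x} \<union> B)"
      by (rule arg_cong[where f = card]) (auto simp: B_def)
    also have "\<dots> = card {x \<in> A. f x = x} + card B"
      using fin by (intro card_Un_disjoint) (auto simp: B_def)
    finally show ?thesis .
  qed
  ultimately show ?thesis
    using dvd B_union by (simp add: dvd_add_left_iff)
qed

section \<open>The diagonal group and the action of \<open>s\<close>\<close>

lemma Dg_nonzero: "d \<in> Dg p \<Longrightarrow> d i \<noteq> 0"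
  by (cases "i < p") (auto simp: Dg_def)

lemma Dg_done1: "done1 \<in> Dg p"
  by (simp add: Dg_def done1_def)

lemma Dg_dmul: "x \<in> Dg p \<Longrightarrow> y \<in> Dg p \<Longrightarrow> dmul x y \<in> Dg p"
  by (simp add: Dg_def dmul_def)

lemma Dg_dinv: "x \<in> Dg p \<Longrightarrow> dinv x \<in> Dg p"
  by (simp add: Dg_def dinv_def)

lemma Dg_dpow: "x \<in> Dg p \<Longrightarrow> dpow x n \<in> Dg p"
  by (simp add: Dg_def dpow_def)

lemma Dg_sact: "x \<in> Dg p \<Longrightarrow> sact p x \<in> Dg p"
  by (simp add: Dg_def sact_def)

lemma dmul_done1 [simp]: "dmul x done1 = x" "dmul done1 x = x"
  by (simp_all add: dmul_def done1_def)

lemma dinv_done1 [simp]: "dinv done1 = done1"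
  by (simp add: dinv_def done1_def)

lemma dpow_done1 [simp]: "dpow done1 n = done1"
  by (simp add: dpow_def done1_def)

lemma dpow_dmul: "dpow (dmul x y) n = dmul (dpow x n) (dpow y n)"
  by (simp add: dpow_def dmul_def power_mult_distrib)

lemma dpow_dinv: "dpow (dinv x) n = dinv (dpow x n)"
  by (simp add: dpow_def dinv_def power_inverse)

lemma dpow_dpow: "dpow (dpow x a) b = dpow x (a * b)"
  by (simp add: dpow_def power_mult)

lemma dmul_dinv_cancel:
  assumes "z \<in> Dg p"
  shows "dmul (dmul x z) (dinv z) = x"
  using Dg_nonzero[OF assms] by (simp add: dmul_def dinv_def fun_eq_iff)

lemma dpow_eq_done1_dvd:
  assumes "dpow x n = done1" and "n dvd m"
  shows "dpow x m = done1"
proof -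
  obtain k where "m = n * k"
    using assms(2) by blast
  then show ?thesis
    using assms(1) by (simp flip: dpow_dpow)
qed

lemma dpow_Suc: "dpow x (Suc n) = dmul x (dpow x n)"
  by (simp add: dpow_def dmul_def)

lemma sact_apply: "sact p x i = (if i < p then x (if i = 0 then p - 1 else i - 1) else 1)"
  by (cases i) (simp_all add: sact_def)

lemma sact_dpow: "sact p (dpow x n) = dpow (sact p x) n"
  by (auto simp: sact_def dpow_def)

lemma sact_done1 [simp]: "sact p done1 = done1"
  by (simp add: sact_def done1_def)

lemma gam_dmul: "gam p (dmul x y) = dmul (gam p x) (gam p y)"
  by (auto simp: gam_def dmul_def dinv_def sact_def)

lemma gam_dinv: "gam p (dinv x) = dinv (gam p x)"
  by (auto simp: gam_def dmul_def dinv_def sact_def)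

lemma gam_dpow: "gam p (dpow x n) = dpow (gam p x) n"
  by (auto simp: gam_def dmul_def dinv_def sact_def dpow_def power_mult_distrib power_inverse)

lemma gam_sact: "gam p (sact p x) = sact p (gam p x)"
  by (auto simp: gam_def dmul_def dinv_def sact_def)

lemma gam_done1 [simp]: "gam p done1 = done1"
  by (simp add: gam_def dmul_def dinv_def sact_def done1_def)

lemma funpow_gam_dmul: "(gam p ^^ k) (dmul x y) = dmul ((gam p ^^ k) x) ((gam p ^^ k) y)"
  by (induction k) (simp_all add: gam_dmul)

lemma funpow_gam_dinv: "(gam p ^^ k) (dinv x) = dinv ((gam p ^^ k) x)"
  by (induction k) (simp_all add: gam_dinv)

lemma funpow_gam_sact: "(gam p ^^ k) (sact p x) = sact p ((gam p ^^ k) x)"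
  by (induction k) (simp_all add: gam_sact)

lemma funpow_gam_done1 [simp]: "(gam p ^^ k) done1 = done1"
  by (induction k) simp_all

lemma prod_sact:
  assumes "0 < p"
  shows "(\<Prod>i<p. sact p x i) = (\<Prod>i<p. x i)"
proof -
  obtain q where q: "p = Suc q"
    using assms by (cases p) auto
  have "(\<Prod>i<p. sact p x i) = x q * (\<Prod>i<q. x i)"
    unfolding q prod.lessThan_Suc_shift by (simp add: sact_apply)
  then show ?thesis
    by (simp add: q mult.commute)
qed

lemma Xg_Dg: "x \<in> Xg p \<Longrightarrow> x \<in> Dg p"
  by (simp add: Xg_def)

lemma Xg_done1: "done1 \<in> Xg p"
  by (simp add: Xg_def Dg_done1) (simp add: done1_def)

lemma Xg_dmul: "x \<in> Xg p \<Longrightarrow> y \<in> Xg p \<Longrightarrow> dmul x y \<in> Xg p"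
  by (simp add: Xg_def Dg_dmul) (simp add: dmul_def prod.distrib)

lemma Xg_dinv: "x \<in> Xg p \<Longrightarrow> dinv x \<in> Xg p"
  by (simp add: Xg_def Dg_dinv) (simp add: dinv_def prod_inversef[of x, unfolded comp_def])

lemma Xg_dpow: "x \<in> Xg p \<Longrightarrow> dpow x n \<in> Xg p"
  by (simp add: Xg_def Dg_dpow) (simp add: dpow_def prod_power_distrib[symmetric])

lemma Xg_sact: "0 < p \<Longrightarrow> x \<in> Xg p \<Longrightarrow> sact p x \<in> Xg p"
  by (simp add: Xg_def Dg_sact prod_sact)

lemma Xg_gam: "0 < p \<Longrightarrow> x \<in> Xg p \<Longrightarrow> gam p x \<in> Xg p"
  unfolding gam_def by (intro Xg_dmul Xg_dinv Xg_sact)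

lemma Xg_eq_done1I:
  assumes x: "x \<in> Xg p" and above: "\<And>i. 0 < i \<Longrightarrow> x i = 1"
  shows "x = done1"
proof -
  have "x 0 = 1"
  proof (cases p)
    case 0
    then show ?thesis
      using x by (simp add: Xg_def Dg_def)
  next
    case (Suc q)
    then have "x 0 * (\<Prod>t<q. x (Suc t)) = 1"
      using x by (simp add: Xg_def flip: prod.lessThan_Suc_shift)
    then show ?thesis
      using above by simp
  qed
  then have "x i = 1" for i
    using above by (cases i) simp_all
  then show ?thesis
    by (simp add: done1_def fun_eq_iff)
qed

lemma funpow_sact_apply:
  assumes "i < p"
  shows "(sact p ^^ k) x i = x ((i + k * (p - 1)) mod p)"
  using assms
proof (induction k arbitrary: i)
  case (Suc k)
  have "(sact p ^^ Suc k) x i = (sact p ^^ k) x ((i + p - 1) mod p)"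
    unfolding funpow.simps comp_apply sact_def[of p "(sact p ^^ k) x"] using Suc.prems by simp
  also have "\<dots> = x (((i + p - 1) mod p + k * (p - 1)) mod p)"
    using Suc by simp
  also have "((i + p - 1) mod p + k * (p - 1)) mod p = (i + p - 1 + k * (p - 1)) mod p"
    by (rule mod_add_left_eq)
  also have "i + p - 1 + k * (p - 1) = i + Suc k * (p - 1)"
    using Suc.prems by simp
  finally show ?case .
qed simp

lemma funpow_sact_period:
  assumes "x \<in> Dg p"
  shows "(sact p ^^ p) x = x"
proof
  fix i
  show "(sact p ^^ p) x i = x i"
  proof (cases "i < p")
    case True
    then show ?thesis by (simp add: funpow_sact_apply)
  next
    case False
    then show ?thesis
      using assms by (cases p) (simp_all add: sact_def Dg_def)
  qed
qed

section \<open>The kernels of the powers of \<open>\<gamma>\<close>\<close>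

definition dscalar :: "nat \<Rightarrow> complex \<Rightarrow> nat \<Rightarrow> complex" where
  "dscalar p w = (\<lambda>i. if i < p then w else 1)"

lemma sact_dscalar [simp]: "sact p (dscalar p w) = dscalar p w"
  by (auto simp: sact_def dscalar_def)

lemma sact_fixed_iff_scalar:
  assumes "x \<in> Dg p"
  shows "sact p x = x \<longleftrightarrow> x = dscalar p (x 0)"
proof
  assume fixed: "sact p x = x"
  have const: "x i = x 0" if "i < p" for i
    using that
  proof (induction i)
    case (Suc i)
    have "x (Suc i) = sact p x (Suc i)"
      using fixed by simp
    also have "\<dots> = x i"
      using Suc.prems by (simp add: sact_def)
    finally show ?case
      using Suc by simp
  qed simp
  show "x = dscalar p (x 0)"
  proof
    fix i
    show "x i = dscalar p (x 0) i"
      using const[of i] assms by (cases "i < p") (simp_all add: dscalar_def Dg_def)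
  qed
next
  assume "x = dscalar p (x 0)"
  then show "sact p x = x"
    by (metis sact_dscalar)
qed

lemma gam_eq_done1_iff:
  assumes "x \<in> Dg p"
  shows "gam p x = done1 \<longleftrightarrow> sact p x = x"
proof -
  have "gam p x = done1 \<longleftrightarrow> (\<forall>i. x i * inverse (sact p x i) = 1)"
    by (simp add: gam_def dmul_def dinv_def done1_def fun_eq_iff)
  also have "\<dots> \<longleftrightarrow> (\<forall>i. x i = sact p x i)"
    using Dg_nonzero[OF Dg_sact[OF assms]] by (simp add: right_inverse_eq flip: divide_inverse)
  finally show ?thesis
    by (auto simp: fun_eq_iff)
qed

lemma dscalar_in_Xg_iff:
  assumes "0 < p"
  shows "dscalar p w \<in> Xg p \<longleftrightarrow> w ^ p = 1"
  using assms by (auto simp: Xg_def Dg_def dscalar_def zero_power)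

lemma Xker_1_eq:
  assumes "0 < p"
  shows "Xker p 1 = dscalar p ` {w. w ^ p = 1}"
proof (intro equalityI subsetI)
  fix x assume "x \<in> Xker p 1"
  then have x: "x \<in> Xg p" and "gam p x = done1"
    by (simp_all add: Xker_def)
  then have "x = dscalar p (x 0)"
    using gam_eq_done1_iff sact_fixed_iff_scalar Xg_Dg by blast
  moreover have "x 0 ^ p = 1"
    using x dscalar_in_Xg_iff[OF assms] calculation by metis
  ultimately show "x \<in> dscalar p ` {w. w ^ p = 1}"
    by blast
next
  fix x assume "x \<in> dscalar p ` {w. w ^ p = 1}"
  then obtain w where "w ^ p = 1" and x: "x = dscalar p w"
    by blast
  then have "x \<in> Xg p"
    using dscalar_in_Xg_iff[OF assms] by simp
  moreover have "gam p x = done1"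
    using calculation gam_eq_done1_iff Xg_Dg x by simp
  ultimately show "x \<in> Xker p 1"
    by (simp add: Xker_def)
qed

lemma card_Xker_1:
  assumes "0 < p"
  shows "finite (Xker p 1)" and "card (Xker p 1) = p"
proof -
  have "inj_on (dscalar p) {w. w ^ p = 1}"
    using assms by (auto simp: inj_on_def dscalar_def fun_eq_iff)
  then show "finite (Xker p 1)" and "card (Xker p 1) = p"
    unfolding Xker_1_eq[OF assms]
    using assms by (simp_all add: card_image finite_roots_unity card_roots_unity_eq)
qed

lemma dpow_Xker_1:
  assumes "0 < p" and "y \<in> Xker p 1"
  shows "dpow y p = done1"
  using assms unfolding Xker_1_eq[OF assms(1)] by (auto simp: dpow_def dscalar_def done1_def)

lemma ex_complex_nth_root:
  assumes "0 < n"
  shows "\<exists>c::complex. c ^ n = w"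
proof (cases "w = 0")
  case False
  have "exp (Ln w / of_nat n) ^ n = exp (of_nat n * (Ln w / of_nat n))"
    by (simp only: exp_of_nat_mult)
  also have "\<dots> = w"
    using assms False by simp
  finally show ?thesis ..
qed (use assms in auto)

lemma gam_apply:
  assumes "i < p"
  shows "gam p x i = x i / x (if i = 0 then p - 1 else i - 1)"
  using assms by (simp add: gam_def dmul_def dinv_def sact_apply divide_inverse)

text \<open>The preimage is \<open>x_i = c y_1 \<cdots> y_i\<close> with \<open>c\<close> a \<open>p\<close>-th root chosen to make
  \<open>det x = 1\<close>; then \<open>x_i / x_(i-1) = y_i\<close>, and \<open>x_0 / x_(p-1) = y_0\<close> because \<open>det y = 1\<close>.\<close>

lemma gam_surjective:
  assumes "0 < p" and y: "y \<in> Xg p"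
  obtains x where "x \<in> Xg p" and "gam p x = y"
proof -
  obtain q where q: "p = Suc q"
    using assms by (cases p) auto
  define P where "P i = (\<Prod>t<i. y (Suc t))" for i
  have P_nonzero: "P i \<noteq> 0" for i
    using Dg_nonzero[OF Xg_Dg[OF y]] by (simp add: P_def)
  have P0: "P 0 = 1"
    by (simp add: P_def)
  have y0: "y 0 * P q = 1"
    using y unfolding Xg_def P_def q prod.lessThan_Suc_shift by simp
  obtain c where c: "c ^ p = inverse (\<Prod>i<p. P i)"
    using ex_complex_nth_root[OF assms(1)] by blast
  have c_nonzero: "c \<noteq> 0"
    using c P_nonzero assms by (auto simp: zero_power)
  define x where "x i = (if i < p then c * P i else 1)" for i
  have "x \<in> Dg p"
    using c_nonzero P_nonzero by (simp add: Dg_def x_def)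
  moreover have "(\<Prod>i<p. x i) = 1"
    using c P_nonzero by (simp add: x_def prod.distrib)
  ultimately have "x \<in> Xg p"
    by (simp add: Xg_def)
  moreover have "gam p x i = y i" for i
  proof (cases "i < p")
    case False
    then show ?thesis
      using y by (simp add: gam_def dmul_def dinv_def sact_def x_def Xg_def Dg_def)
  next
    case True
    show ?thesis
    proof (cases i)
      case 0
      then show ?thesis
        using c_nonzero P_nonzero P0 y0 by (simp add: gam_apply x_def q field_simps)
    next
      case (Suc k)
      then show ?thesis
        using True c_nonzero P_nonzero by (simp add: gam_apply x_def P_def)
    qed
  qed
  ultimately show ?thesis
    using that by blast
qed

lemma Xker_0: "Xker p 0 = {done1}"
  by (auto simp: Xker_def Xg_done1)

lemma Xker_Suc:
  assumes "0 < p"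
  shows "Xker p (Suc k) = {x \<in> Xg p. gam p x \<in> Xker p k}"
  using assms by (auto simp: Xker_def funpow_Suc_right Xg_gam simp del: funpow.simps)

lemma gam_image_Xker:
  assumes "0 < p"
  shows "gam p ` Xker p (Suc k) = Xker p k"
proof
  show "gam p ` Xker p (Suc k) \<subseteq> Xker p k"
    using Xker_Suc[OF assms] by auto
  show "Xker p k \<subseteq> gam p ` Xker p (Suc k)"
  proof
    fix y assume y: "y \<in> Xker p k"
    then obtain x where "x \<in> Xg p" and "gam p x = y"
      using gam_surjective[OF assms] by (auto simp: Xker_def)
    with y show "y \<in> gam p ` Xker p (Suc k)"
      using Xker_Suc[OF assms] by auto
  qed
qed

lemma funpow_gam_image_Xker:
  assumes "0 < p"
  shows "(gam p ^^ m) ` Xker p (j + m) = Xker p j"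
proof (induction m)
  case (Suc m)
  have "(gam p ^^ Suc m) ` Xker p (j + Suc m) = (gam p ^^ m) ` gam p ` Xker p (Suc (j + m))"
    by (simp add: funpow_Suc_right image_comp del: funpow.simps)
  then show ?case
    using Suc gam_image_Xker[OF assms] by simp
qed simp

lemma gam_fibre:
  assumes "0 < p" and x0: "x0 \<in> Xg p"
  shows "{x \<in> Xg p. gam p x = gam p x0} = dmul x0 ` Xker p 1"
proof (intro equalityI subsetI)
  fix x assume "x \<in> {x \<in> Xg p. gam p x = gam p x0}"
  then have x: "x \<in> Xg p" and same: "gam p x = gam p x0"
    by simp_all
  define c where "c = dmul (dinv x0) x"
  have "x = dmul x0 c"
    using Dg_nonzero[OF Xg_Dg[OF x0]] by (auto simp: c_def dmul_def dinv_def)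
  moreover have "gam p c = dmul (dinv (gam p x0)) (gam p x0)"
    by (simp only: c_def gam_dmul gam_dinv same)
  then have "gam p c = done1"
    using Dg_nonzero[OF Xg_Dg[OF Xg_gam[OF assms]]] by (simp add: dmul_def dinv_def done1_def)
  then have "c \<in> Xker p 1"
    using x x0 by (simp add: Xker_def c_def Xg_dmul Xg_dinv)
  ultimately show "x \<in> dmul x0 ` Xker p 1"
    by blast
next
  fix x assume "x \<in> dmul x0 ` Xker p 1"
  then show "x \<in> {x \<in> Xg p. gam p x = gam p x0}"
    using x0 by (auto simp: Xker_def gam_dmul Xg_dmul)
qed

lemma card_eq_mult_card_gam_image:
  assumes "0 < p" and S: "S \<subseteq> Xg p"
    and closed: "\<And>x c. x \<in> S \<Longrightarrow> c \<in> Xker p 1 \<Longrightarrow> dmul x c \<in> S"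
    and fin: "finite (gam p ` S)"
  shows "finite S" and "card S = p * card (gam p ` S)"
proof -
  let ?F = "\<lambda>y. {x \<in> S. gam p x = y}"
  have fibre: "finite (?F y) \<and> card (?F y) = p" if y: "y \<in> gam p ` S" for y
  proof -
    obtain x0 where x0: "x0 \<in> S" and y: "y = gam p x0"
      using y by blast
    have "?F y = dmul x0 ` Xker p 1"
      using gam_fibre[OF assms(1), of x0] closed[OF x0] x0 S y by blast
    moreover have "inj_on (dmul x0) (Xker p 1)"
      using Dg_nonzero[OF Xg_Dg, of x0 p] x0 S by (auto simp: inj_on_def dmul_def fun_eq_iff)
    ultimately show ?thesis
      using card_Xker_1[OF assms(1)] by (simp add: card_image)
  qed
  have S_eq: "S = (\<Union>y\<in>gam p ` S. ?F y)"
    by auto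
  show "finite S"
    using fin fibre by (subst S_eq) blast
  have "card S = (\<Sum>y\<in>gam p ` S. card (?F y))"
    using fin fibre by (subst S_eq, intro card_UN_disjoint) auto
  also have "\<dots> = p * card (gam p ` S)"
    using fibre by simp
  finally show "card S = p * card (gam p ` S)" .
qed

lemma card_Xker:
  assumes "0 < p"
  shows "finite (Xker p k) \<and> card (Xker p k) = p ^ k"
proof (induction k)
  case 0
  then show ?case by (simp add: Xker_0)
next
  case (Suc k)
  have "x \<in> Xker p (Suc k) \<Longrightarrow> c \<in> Xker p 1 \<Longrightarrow> dmul x c \<in> Xker p (Suc k)" for x c
    by (auto simp: Xker_def funpow_gam_dmul funpow_Suc_right gam_dmul Xg_dmul simp del: funpow.simps)
  then show ?case
    using card_eq_mult_card_gam_image[OF assms, of "Xker p (Suc k)"] Suc gam_image_Xker[OF assms]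
    by (auto simp: Xker_def)
qed

lemma dpow_Xker:
  assumes "0 < p" and "x \<in> Xker p k"
  shows "dpow x (p ^ k) = done1"
  using assms(2)
proof (induction k arbitrary: x)
  case 0
  then show ?case by (simp add: Xker_0)
next
  case (Suc k)
  then have x: "x \<in> Xg p" and "gam p x \<in> Xker p k"
    using Xker_Suc[OF assms(1)] by auto
  then have "gam p (dpow x (p ^ k)) = done1"
    using Suc.IH by (simp add: gam_dpow)
  then have "dpow x (p ^ k) \<in> Xker p 1"
    using Xg_dpow[OF x] by (simp add: Xker_def)
  then have "dpow (dpow x (p ^ k)) p = done1"
    by (rule dpow_Xker_1[OF assms(1)])
  then show ?case
    by (simp add: dpow_dpow mult.commute)
qed

section \<open>Uniqueness of the submodule of a given order\<close>

lemma submod_subset_Xg: "is_submod p H \<Longrightarrow> H \<subseteq> Xg p"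
  by (auto simp: is_submod_def Xpp_def)

lemma submod_dpow:
  assumes "is_submod p H" and "x \<in> H"
  shows "dpow x n \<in> H"
proof (induction n)
  case 0
  then show ?case
    using assms(1) by (simp add: is_submod_def dpow_def flip: done1_def)
next
  case (Suc n)
  then show ?case
    using assms by (simp add: is_submod_def dpow_Suc)
qed

lemma is_submod_Xpp:
  assumes "0 < p"
  shows "is_submod p (Xpp p)"
  unfolding is_submod_def
proof (intro conjI ballI subsetI)
  show "done1 \<in> Xpp p"
    using Xg_done1 by (auto simp: Xpp_def intro: exI[of _ 0])
  fix x assume x: "x \<in> Xpp p"
  then obtain a where a: "dpow x (p ^ a) = done1" and "x \<in> Xg p"
    by (auto simp: Xpp_def)
  then show "dinv x \<in> Xpp p" and "sact p x \<in> Xpp p"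
    using assms by (auto simp: Xpp_def Xg_dinv Xg_sact dpow_dinv sact_dpow[symmetric] intro!: exI[of _ a])
  fix y assume "y \<in> Xpp p"
  then obtain b where b: "dpow y (p ^ b) = done1" and "y \<in> Xg p"
    by (auto simp: Xpp_def)
  have "dpow x (p ^ (a + b)) = done1" and "dpow y (p ^ (a + b)) = done1"
    using dpow_eq_done1_dvd a b by (simp_all add: le_imp_power_dvd)
  then show "dmul x y \<in> Xpp p"
    using \<open>x \<in> Xg p\<close> \<open>y \<in> Xg p\<close>
    by (auto simp: Xpp_def Xg_dmul dpow_dmul intro!: exI[of _ "a + b"])
qed simp

lemma is_submod_Xker:
  assumes "0 < p"
  shows "is_submod p (Xker p k)"
proof -
  have "Xker p k \<subseteq> Xpp p"
    using dpow_Xker[OF assms] by (auto simp: Xpp_def Xker_def)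
  then show ?thesis
    using assms unfolding is_submod_def
    by (auto simp: Xker_def Xg_done1 Xg_dmul Xg_dinv Xg_sact funpow_gam_dmul funpow_gam_dinv funpow_gam_sact)
qed

lemma is_submod_gam_image:
  assumes "0 < p" and H: "is_submod p H"
  shows "is_submod p (gam p ` H)"
proof -
  have "gam p ` H \<subseteq> Xpp p"
    using H is_submod_Xpp[OF assms(1)] unfolding is_submod_def gam_def by blast
  moreover have "done1 \<in> gam p ` H"
    using H gam_done1 unfolding is_submod_def by (metis image_eqI)
  ultimately show ?thesis
    using H unfolding is_submod_def
    by (auto simp flip: gam_dmul gam_dinv gam_sact)
qed

lemma Xker_1_subset_submod:
  assumes p: "prime p" and H: "is_submod p H" and fin: "finite H" and dvd: "p dvd card H"
  shows "Xker p 1 \<subseteq> H"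
proof -
  have p0: "0 < p"
    using p by (simp add: prime_gt_0_nat)
  define Fix where "Fix = {x \<in> H. sact p x = x}"
  have "p dvd card Fix"
    unfolding Fix_def
  proof (rule prime_dvd_card_fixpoints[OF p fin _ _ dvd])
    show "sact p ` H \<subseteq> H"
      using H by (auto simp: is_submod_def)
    show "(sact p ^^ p) x = x" if "x \<in> H" for x
      using that submod_subset_Xg[OF H] by (simp add: funpow_sact_period Xg_Dg subset_iff)
  qed
  moreover have "done1 \<in> Fix"
    using H by (simp add: Fix_def is_submod_def)
  moreover have "finite Fix"
    using fin by (simp add: Fix_def)
  ultimately have "p \<le> card Fix"
    by (intro dvd_imp_le) (auto simp: card_gt_0_iff)
  moreover have "Fix \<subseteq> Xker p 1"
    using submod_subset_Xg[OF H] by (auto simp: Fix_def Xker_def gam_eq_done1_iff Xg_Dg)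
  ultimately have "Fix = Xker p 1"
    using card_Xker_1[OF p0] by (metis card_seteq)
  then show ?thesis
    by (auto simp: Fix_def)
qed

lemma submod_eq_Xker:
  assumes p: "prime p"
  shows "is_submod p H \<Longrightarrow> finite H \<Longrightarrow> card H = p ^ j \<Longrightarrow> H = Xker p j"
proof (induction j arbitrary: H)
  case 0
  then have "done1 \<in> H" and "card H = 1"
    by (simp_all add: is_submod_def)
  then have "H = {done1}"
    by (auto simp: card_1_singleton_iff)
  then show ?case
    by (simp add: Xker_0)
next
  case (Suc j)
  have p0: "0 < p"
    using p by (simp add: prime_gt_0_nat)
  have "Xker p 1 \<subseteq> H"
    using Suc.prems by (intro Xker_1_subset_submod[OF p]) simp_all
  then have "dmul x c \<in> H" if "x \<in> H" and "c \<in> Xker p 1" for x c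
    using that Suc.prems(1) by (auto simp: is_submod_def)
  then have "card H = p * card (gam p ` H)"
    using Suc.prems(2) by (intro card_eq_mult_card_gam_image[OF p0 submod_subset_Xg[OF Suc.prems(1)]]) simp_all
  then have "gam p ` H = Xker p j"
    using Suc.IH is_submod_gam_image[OF p0] Suc.prems p0 by simp
  then have "H \<subseteq> Xker p (Suc j)"
    using Suc.prems(1) submod_subset_Xg Xker_Suc[OF p0] by blast
  then show ?case
    using card_Xker[OF p0, of "Suc j"] Suc.prems(2,3) by (simp add: card_subset_eq)
qed

section \<open>Generators\<close>

definition Xtors :: "nat \<Rightarrow> nat \<Rightarrow> (nat \<Rightarrow> complex) set" where
  "Xtors p M = {x \<in> Xg p. dpow x M = done1}"

lemma Xtors_dmul: "x \<in> Xtors p M \<Longrightarrow> y \<in> Xtors p M \<Longrightarrow> dmul x y \<in> Xtors p M"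
  by (simp add: Xtors_def Xg_dmul dpow_dmul)

lemma Xtors_dpow: "x \<in> Xtors p M \<Longrightarrow> dpow x a \<in> Xtors p M"
  by (auto simp: Xtors_def Xg_dpow dpow_dpow intro: dpow_eq_done1_dvd)

lemma Xtors_sact: "0 < p \<Longrightarrow> x \<in> Xtors p M \<Longrightarrow> sact p x \<in> Xtors p M"
  by (simp add: Xtors_def Xg_sact flip: sact_dpow)

lemma is_submod_Xtors:
  assumes "0 < p"
  shows "is_submod p (Xtors p (p ^ n))"
  using assms unfolding is_submod_def
  by (auto simp: Xtors_def Xpp_def Xg_done1 Xg_dmul Xg_dinv Xg_sact dpow_dmul dpow_dinv
      simp flip: sact_dpow)

definition det_one_completion :: "nat \<Rightarrow> (nat \<Rightarrow> complex) \<Rightarrow> nat \<Rightarrow> complex" where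
  "det_one_completion p g =
     (\<lambda>i. if i = 0 then inverse (\<Prod>t<p - 1. g t) else if i < p then g (i - 1) else 1)"

lemma det_one_completion_in_Xtors:
  assumes p: "p = Suc q" and M: "0 < M" and roots: "\<And>t. t < q \<Longrightarrow> g t ^ M = 1"
  shows "det_one_completion p g \<in> Xtors p M"
proof -
  let ?x = "det_one_completion p g"
  have g_nonzero: "g t \<noteq> 0" if "t < q" for t
    using roots[OF that] M by (metis power_0_left not_gr0 zero_neq_one)
  then have prod_nonzero: "(\<Prod>t<q. g t) \<noteq> 0"
    by simp
  have "(\<Prod>t<q. g t) ^ M = (\<Prod>t<q. g t ^ M)"
    by (rule prod_power_distrib)
  also have "\<dots> = 1"
    using roots by (intro prod.neutral) simp
  finally have prod_pow: "(\<Prod>t<q. g t) ^ M = 1" .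
  have "?x \<in> Dg p"
    using g_nonzero prod_nonzero p by (auto simp: Dg_def det_one_completion_def)
  moreover have "(\<Prod>i<p. ?x i) = 1"
    unfolding p prod.lessThan_Suc_shift using prod_nonzero by (simp add: det_one_completion_def)
  moreover have "?x i ^ M = 1" for i
    using roots[of "i - 1"] prod_pow p by (simp add: det_one_completion_def power_inverse)
  then have "dpow ?x M = done1"
    by (simp add: dpow_def done1_def)
  ultimately show ?thesis
    by (simp add: Xtors_def Xg_def)
qed

lemma bij_betw_Xtors_roots_of_unity:
  assumes p: "p = Suc q" and M: "0 < M"
  shows "bij_betw (\<lambda>x. restrict (\<lambda>t. x (Suc t)) {..<q}) (Xtors p M) (PiE {..<q} (\<lambda>_. {z. z ^ M = 1}))"
proof (rule bij_betw_byWitness[where f' = "det_one_completion p"])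
  show "\<forall>x\<in>Xtors p M. det_one_completion p (restrict (\<lambda>t. x (Suc t)) {..<q}) = x"
  proof
    fix x assume x: "x \<in> Xtors p M"
    then have "(\<Prod>i<p. x i) = 1"
      by (simp add: Xtors_def Xg_def)
    then have "x 0 * (\<Prod>t<q. x (Suc t)) = 1"
      by (simp only: p prod.lessThan_Suc_shift)
    then have "inverse (\<Prod>t<q. x (Suc t)) = x 0"
      by (metis inverse_unique mult.commute)
    then show "det_one_completion p (restrict (\<lambda>t. x (Suc t)) {..<q}) = x"
      using x p by (auto simp: det_one_completion_def Xtors_def Xg_def Dg_def fun_eq_iff)
  qed
  show "\<forall>g\<in>PiE {..<q} (\<lambda>_. {z. z ^ M = 1}). restrict (\<lambda>t. det_one_completion p g (Suc t)) {..<q} = g"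
    by (auto simp: det_one_completion_def p PiE_def extensional_def fun_eq_iff)
  show "(\<lambda>x. restrict (\<lambda>t. x (Suc t)) {..<q}) ` Xtors p M \<subseteq> PiE {..<q} (\<lambda>_. {z. z ^ M = 1})"
  proof
    fix y assume "y \<in> (\<lambda>x. restrict (\<lambda>t. x (Suc t)) {..<q}) ` Xtors p M"
    then obtain x where x: "x \<in> Xtors p M" and y: "y = restrict (\<lambda>t. x (Suc t)) {..<q}"
      by blast
    have "x i ^ M = 1" for i
      using x by (simp add: Xtors_def dpow_def done1_def fun_eq_iff)
    then show "y \<in> PiE {..<q} (\<lambda>_. {z. z ^ M = 1})"
      unfolding y by (simp add: restrict_PiE_iff)
  qed
  show "det_one_completion p ` PiE {..<q} (\<lambda>_. {z. z ^ M = 1}) \<subseteq> Xtors p M"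
    using det_one_completion_in_Xtors[OF p M] by auto
qed

lemma card_Xtors:
  assumes "0 < p" and "0 < M"
  shows "finite (Xtors p M)" and "card (Xtors p M) = M ^ (p - 1)"
proof -
  obtain q where q: "p = Suc q"
    using assms by (cases p) auto
  have "finite (PiE {..<q} (\<lambda>_. {z::complex. z ^ M = 1}))"
    and "card (PiE {..<q} (\<lambda>_. {z::complex. z ^ M = 1})) = M ^ q"
    using assms(2) by (simp_all add: card_PiE finite_PiE finite_roots_unity card_roots_unity_eq)
  with bij_betw_Xtors_roots_of_unity[OF q assms(2)]
  show "finite (Xtors p M)" and "card (Xtors p M) = M ^ (p - 1)"
    using q by (simp_all add: bij_betw_finite bij_betw_same_card)
qed

definition zeta :: "nat \<Rightarrow> complex" where
  "zeta M = exp (of_real (2 * pi) * \<i> / of_nat M)"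

lemma zeta_nonzero: "zeta M \<noteq> 0"
  by (simp add: zeta_def)

lemma zeta_power: "zeta M ^ k = exp (2 * of_real pi * \<i> * of_nat k / of_nat M)"
  unfolding zeta_def exp_of_nat_mult[symmetric] by (simp add: field_simps)

lemma zeta_power_self: "0 < M \<Longrightarrow> zeta M ^ M = 1"
  by (simp add: zeta_power)

lemma root_of_unity_eq_zeta_power:
  assumes "0 < M" and "w ^ M = 1"
  obtains a where "w = zeta M ^ a"
  using assms complex_roots_unity[of M] by (auto simp: zeta_power)

lemma bm_eq: "bm p M = (\<lambda>i. if i = 0 then zeta M else if i = 1 then inverse (zeta M) else 1)"
proof -
  have "of_real (- 2 * pi) * \<i> / of_nat M = - (of_real (2 * pi) * \<i> / of_nat M)"
    by simp
  then have minus: "exp (of_real (- 2 * pi) * \<i> / of_nat M) = inverse (zeta M)"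
    by (simp only: zeta_def exp_minus)
  show ?thesis
    unfolding bm_def zeta_def[symmetric] minus ..
qed

lemma funpow_sact_bm:
  assumes "Suc m < p"
  shows "(sact p ^^ m) (bm p M) = (\<lambda>i. if i = m then zeta M else if i = Suc m then inverse (zeta M) else 1)"
  using assms
proof (induction m)
  case 0
  then show ?case by (simp add: bm_eq fun_eq_iff)
next
  case (Suc m)
  show ?case
  proof
    fix i
    have "(sact p ^^ Suc m) (bm p M) i =
        sact p (\<lambda>i. if i = m then zeta M else if i = Suc m then inverse (zeta M) else 1) i"
      using Suc by simp
    also have "\<dots> = (if i = Suc m then zeta M else if i = Suc (Suc m) then inverse (zeta M) else 1)"
    proof (cases i)
      case 0
      have "p - 1 \<noteq> m" and "p - 1 \<noteq> Suc m"
        using Suc.prems by linarith+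
      with 0 show ?thesis
        by (simp add: sact_apply)
    qed (use Suc.prems in \<open>simp add: sact_apply\<close>)
    finally show "(sact p ^^ Suc m) (bm p M) i = \<dots>" .
  qed
qed

lemma bm_in_Xtors:
  assumes "1 < p" and "0 < M"
  shows "bm p M \<in> Xtors p M"
proof -
  obtain r where r: "p = Suc (Suc r)"
    using less_imp_Suc_add[OF assms(1)] by auto
  have "(\<Prod>i<p. bm p M i) = 1"
    unfolding r prod.lessThan_Suc_shift by (simp add: bm_eq zeta_nonzero)
  moreover have "bm p M \<in> Dg p"
    using assms(1) by (simp add: Dg_def bm_eq zeta_nonzero)
  moreover have "dpow (bm p M) M = done1"
    using zeta_power_self[OF assms(2)] by (auto simp: dpow_def bm_eq done1_def power_inverse)
  ultimately show ?thesis
    by (simp add: Xtors_def Xg_def)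
qed

lemma exponent_clearing_coordinate:
  assumes M: "0 < M" and root: "x (Suc m) ^ M = 1" and x_above: "\<forall>i>Suc m. x i = 1"
    and e_m: "e (Suc m) = inverse (zeta M)" and e_above: "\<forall>i>Suc m. e i = 1"
  obtains a where "\<forall>i>m. dmul x (dpow e a) i = 1"
proof -
  from M root obtain a where a: "x (Suc m) = zeta M ^ a"
    by (rule root_of_unity_eq_zeta_power)
  have "dmul x (dpow e a) i = 1" if "m < i" for i
  proof (cases "i = Suc m")
    case True
    then show ?thesis
      using a e_m zeta_nonzero by (simp add: dmul_def dpow_def power_inverse)
  next
    case False
    then show ?thesis
      using that x_above e_above by (simp add: dmul_def dpow_def)
  qed
  then show ?thesis
    using that by blast
qed

text \<open>Induction on the last nontrivial coordinate: \<open>s^m b_M\<close> carries \<open>\<zeta>\<close> and \<open>\<zeta>^-1\<close>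
  in positions \<open>m\<close> and \<open>m + 1\<close>, so a power of it clears coordinate \<open>m + 1\<close> of \<open>x\<close>;
  once only coordinate \<open>0\<close> is left, \<open>det x = 1\<close> forces \<open>x = 1\<close>.\<close>

lemma Xtors_trivial_above_in_submod:
  assumes p: "1 < p" and M: "0 < M" and H: "is_submod p H" and b: "bm p M \<in> H"
  shows "x \<in> Xtors p M \<Longrightarrow> \<forall>i>k. x i = 1 \<Longrightarrow> x \<in> H"
proof (induction k arbitrary: x)
  case 0
  then have "x = done1"
    by (intro Xg_eq_done1I[of _ p]) (simp_all add: Xtors_def)
  then show ?case
    using H by (simp add: is_submod_def)
next
  case (Suc m)
  show ?case
  proof (cases "Suc m < p")
    case False
    then have "\<forall>i>m. x i = 1"
      using Suc.prems(1) by (simp add: Xtors_def Xg_def Dg_def)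
    then show ?thesis
      using Suc.IH Suc.prems(1) by blast
  next
    case True
    define e where "e = (sact p ^^ m) (bm p M)"
    have e_eq: "e = (\<lambda>i. if i = m then zeta M else if i = Suc m then inverse (zeta M) else 1)"
      unfolding e_def using True by (rule funpow_sact_bm)
    have "e \<in> H"
      unfolding e_def using H b by (intro funpow_closed[of H]) (simp_all add: is_submod_def)
    have e_Xtors: "e \<in> Xtors p M"
      unfolding e_def using bm_in_Xtors[OF p M] p
      by (intro funpow_closed[of "Xtors p M"] Xtors_sact) simp_all
    have root: "x (Suc m) ^ M = 1"
      using Suc.prems(1) by (simp add: Xtors_def dpow_def done1_def fun_eq_iff)
    have e_m: "e (Suc m) = inverse (zeta M)" and e_above: "\<forall>i>Suc m. e i = 1"
      by (simp_all add: e_eq)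
    obtain a where cleared: "\<forall>i>m. dmul x (dpow e a) i = 1"
      using exponent_clearing_coordinate[OF M root Suc.prems(2) e_m e_above] .
    have "dpow e a \<in> Dg p"
      using e_Xtors by (simp add: Dg_dpow Xtors_def Xg_Dg)
    then have x_eq: "x = dmul (dmul x (dpow e a)) (dinv (dpow e a))"
      by (simp add: dmul_dinv_cancel)
    have "dmul x (dpow e a) \<in> H"
      using Suc.prems(1) e_Xtors cleared by (intro Suc.IH Xtors_dmul Xtors_dpow)
    moreover have "dinv (dpow e a) \<in> H"
      using H submod_dpow[OF H \<open>e \<in> H\<close>] by (simp add: is_submod_def)
    ultimately show ?thesis
      using H by (subst x_eq) (simp add: is_submod_def)
  qed
qed

lemma Xtors_subset_submod:
  assumes "1 < p" and "0 < M" and "is_submod p H" and "bm p M \<in> H"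
  shows "Xtors p M \<subseteq> H"
proof
  fix x assume x: "x \<in> Xtors p M"
  then have "\<forall>i>p. x i = 1"
    by (simp add: Xtors_def Xg_def Dg_def)
  with x show "x \<in> H"
    by (rule Xtors_trivial_above_in_submod[OF assms])
qed

lemma gen_submod_eqI:
  assumes "is_submod p H" and "x \<in> H" and "\<And>H'. is_submod p H' \<Longrightarrow> x \<in> H' \<Longrightarrow> H \<subseteq> H'"
  shows "gen_submod p x = H"
  using assms unfolding gen_submod_def by blast

lemma is_submod_funpow_gam_preimage:
  assumes "0 < p" and "is_submod p H"
  shows "is_submod p {y \<in> Xpp p. (gam p ^^ k) y \<in> H}"
  using is_submod_Xpp[OF assms(1)] assms(2) unfolding is_submod_def
  by (auto simp: funpow_gam_dmul funpow_gam_dinv funpow_gam_sact)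

lemma Xker_eq_gen_submod:
  assumes p: "prime p" and jmn: "j + m = n * (p - 1)"
  shows "Xker p j = gen_submod p ((gam p ^^ m) (bm p (p ^ n)))"
proof -
  have p1: "1 < p"
    using p by (rule prime_gt_1_nat)
  then have p0: "0 < p"
    by simp
  let ?b = "bm p (p ^ n)"
  have "card (Xtors p (p ^ n)) = p ^ (j + m)"
    using card_Xtors[OF p0, of "p ^ n"] p0 jmn by (simp add: power_mult)
  then have Xtors_eq: "Xtors p (p ^ n) = Xker p (j + m)"
    using submod_eq_Xker[OF p is_submod_Xtors[OF p0]] card_Xtors[OF p0, of "p ^ n"] p0 by simp
  have image_eq: "(gam p ^^ m) ` Xtors p (p ^ n) = Xker p j"
    unfolding Xtors_eq by (rule funpow_gam_image_Xker[OF p0])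
  have b: "?b \<in> Xtors p (p ^ n)"
    using bm_in_Xtors[OF p1] p0 by simp
  show ?thesis
  proof (rule gen_submod_eqI[symmetric])
    show "is_submod p (Xker p j)"
      by (rule is_submod_Xker[OF p0])
    show "(gam p ^^ m) ?b \<in> Xker p j"
      using b image_eq by blast
    fix H assume H: "is_submod p H" and in_H: "(gam p ^^ m) ?b \<in> H"
    have "?b \<in> Xpp p"
      using b is_submod_Xtors[OF p0, of n] by (auto simp: is_submod_def)
    then have "Xtors p (p ^ n) \<subseteq> {y \<in> Xpp p. (gam p ^^ m) y \<in> H}"
      using in_H p0 by (intro Xtors_subset_submod[OF p1] is_submod_funpow_gam_preimage[OF p0 H]) simp_all
    then have "(gam p ^^ m) ` Xtors p (p ^ n) \<subseteq> H"
      by blast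
    then show "Xker p j \<subseteq> H"
      by (simp only: image_eq)
  qed
qed

lemma xgen_eq_funpow_gam_bm:
  assumes "1 < p"
  obtains n m where "xgen p j = (gam p ^^ m) (bm p (p ^ n))" and "j + m = n * (p - 1)"
proof -
  define d where "d = p - 1"
  define n where "n = (j + p - 2) div (p - 1)"
  have "j + p - 2 = j + d - 1"
    using assms by (simp add: d_def)
  then have "n * d + (j + d - 1) mod d = j + d - 1"
    unfolding n_def d_def[symmetric] by (simp only: div_mult_mod_eq)
  moreover have "(j + d - 1) mod d < d"
    using assms by (simp add: d_def)
  ultimately have "j \<le> n * (p - 1)"
    unfolding d_def by linarith
  then show ?thesis
    using that[of "n * (p - 1) - j" n] by (simp add: xgen_def Let_def n_def)
qed

theorem lemma3p7:
  fixes p :: nat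
  assumes "prime p"
  shows "\<forall>j::nat.
           (\<forall>H. (is_submod p H \<and> finite H \<and> card H = p ^ j) \<longleftrightarrow> H = Xker p j)
           \<and> (j \<ge> 1 \<longrightarrow> Xker p j = gen_submod p (xgen p j))"
proof (intro allI conjI impI)
  fix j H
  have p1: "1 < p"
    using assms by (rule prime_gt_1_nat)
  then have p0: "0 < p"
    by simp
  show "(is_submod p H \<and> finite H \<and> card H = p ^ j) \<longleftrightarrow> H = Xker p j"
    using submod_eq_Xker[OF assms] is_submod_Xker[OF p0] card_Xker[OF p0] by blast
  obtain n m where "xgen p j = (gam p ^^ m) (bm p (p ^ n))" and "j + m = n * (p - 1)"
    using xgen_eq_funpow_gam_bm[OF p1] .
  then show "Xker p j = gen_submod p (xgen p j)"
    using Xker_eq_gen_submod[OF assms] by simp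
qed

end
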